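(* Let $G$ be a group with identity $e$, $A$ a set with at least two elements, and $\tau: A^G\to A^G$ a lazy cellular automaton with unique active transition $p \in A^S$. For any $n \in \mathbb{N}$, $\tau^{n} \neq \tau^{n+1}$ if and only if there exists $x \in A^G$ such that $p$ appears in $\tau^{n}(x)$.
   Context: $A^G$ is the set of maps $G \to A$ with shift action $(g\cdot x)(h) := x(hg)$. A cellular automaton is a map $\tau : A^G \to A^G$ with a finite $S \subseteq G$ and $\mu : A^S \to A$ such that $\tau(x)(g) = \mu((g\cdot x)|_S)$. $\tau$ is lazy with unique active transition $p \in A^S$ if there is such a local defining map $\mu : A^S \to A$ with $e \in S$ such that for all $z \in A^S$: $\mu(z) = z(e)$ iff $z \neq p$. A pattern $p \in A^S$ appears in $x \in A^G$ if there is $g \in G$ with $(g\cdot x)|_S = p$. $\tau^n$ is the $n$-fold composition of $\tau$, with $\tau^0$ the identity, and $\mathbb{N} = \{0,1,2,\dots\}$. *)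

theory Defs
  imports "HOL-Algebra.Group" "HOL-Library.FuncSet"
begin

definition config :: "('g, 'm) monoid_scheme \<Rightarrow> 'a set \<Rightarrow> ('g \<Rightarrow> 'a) set" where
  "config G A = (carrier G \<rightarrow>\<^sub>E A)"

definition shift :: "('g, 'm) monoid_scheme \<Rightarrow> 'g \<Rightarrow> ('g \<Rightarrow> 'a) \<Rightarrow> ('g \<Rightarrow> 'a)" where
  "shift G g x = (\<lambda>h\<in>carrier G. x (h \<otimes>\<^bsub>G\<^esub> g))"

definition local_rule :: "('g, 'm) monoid_scheme \<Rightarrow> 'a set \<Rightarrow> (('g \<Rightarrow> 'a) \<Rightarrow> ('g \<Rightarrow> 'a))
    \<Rightarrow> 'g set \<Rightarrow> (('g \<Rightarrow> 'a) \<Rightarrow> 'a) \<Rightarrow> bool" where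
  "local_rule G A \<tau> S \<mu> \<longleftrightarrow> finite S \<and> S \<subseteq> carrier G \<and> \<mu> \<in> (S \<rightarrow>\<^sub>E A) \<rightarrow> A \<and>
     (\<forall>x\<in>config G A. \<forall>g\<in>carrier G. \<tau> x g = \<mu> (restrict (shift G g x) S))"

definition cellular_automaton :: "('g, 'm) monoid_scheme \<Rightarrow> 'a set \<Rightarrow> (('g \<Rightarrow> 'a) \<Rightarrow> ('g \<Rightarrow> 'a)) \<Rightarrow> bool" where
  "cellular_automaton G A \<tau> \<longleftrightarrow> \<tau> \<in> config G A \<rightarrow> config G A \<and> (\<exists>S \<mu>. local_rule G A \<tau> S \<mu>)"

definition lazy_uat :: "('g, 'm) monoid_scheme \<Rightarrow> 'a set \<Rightarrow> (('g \<Rightarrow> 'a) \<Rightarrow> ('g \<Rightarrow> 'a))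
    \<Rightarrow> 'g set \<Rightarrow> ('g \<Rightarrow> 'a) \<Rightarrow> bool" where
  "lazy_uat G A \<tau> S p \<longleftrightarrow> p \<in> S \<rightarrow>\<^sub>E A \<and>
     (\<exists>\<mu>. local_rule G A \<tau> S \<mu> \<and> \<one>\<^bsub>G\<^esub> \<in> S \<and>
          (\<forall>z\<in>S \<rightarrow>\<^sub>E A. \<mu> z = z \<one>\<^bsub>G\<^esub> \<longleftrightarrow> z \<noteq> p))"

definition appears :: "('g, 'm) monoid_scheme \<Rightarrow> 'g set \<Rightarrow> ('g \<Rightarrow> 'a) \<Rightarrow> ('g \<Rightarrow> 'a) \<Rightarrow> bool" where
  "appears G S p x \<longleftrightarrow> (\<exists>g\<in>carrier G. restrict (shift G g x) S = p)"

end

theory Submission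
  imports Defs
begin

text \<open>
  The local defining map of a lazy cellular automaton changes the state of a cell exactly when
  the pattern seen from that cell is the active transition p. Hence \<open>\<tau> y \<noteq> y\<close> holds iff p
  appears in y, and the theorem is this fact applied to \<open>y = (\<tau> ^^ n) x\<close>.
\<close>

lemma config_neq_iff:
  assumes "x \<in> config G A" "y \<in> config G A"
  shows "x \<noteq> y \<longleftrightarrow> (\<exists>g\<in>carrier G. x g \<noteq> y g)"
  using assms PiE_ext unfolding config_def by metis

lemma restrict_shift_in_PiE:
  assumes "monoid G" "x \<in> config G A" "g \<in> carrier G" "S \<subseteq> carrier G"
  shows "restrict (shift G g x) S \<in> S \<rightarrow>\<^sub>E A"
  using assms unfolding config_def shift_def by (auto simp: PiE_iff intro: monoid.m_closed)

lemma restrict_shift_one: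
  assumes "monoid G" "g \<in> carrier G" "\<one>\<^bsub>G\<^esub> \<in> S"
  shows "restrict (shift G g x) S \<one>\<^bsub>G\<^esub> = x g"
  using assms unfolding shift_def by simp

lemma cellular_automaton_funpow_config:
  assumes "cellular_automaton G A \<tau>" "x \<in> config G A"
  shows "(\<tau> ^^ n) x \<in> config G A"
  using assms by (induction n) (auto simp: cellular_automaton_def)

lemma lazy_uat_moves_iff_appears:
  assumes "monoid G"
    and "cellular_automaton G A \<tau>"
    and "lazy_uat G A \<tau> S p"
    and y: "y \<in> config G A"
  shows "\<tau> y \<noteq> y \<longleftrightarrow> appears G S p y"
proof -
  from \<open>lazy_uat G A \<tau> S p\<close> obtain \<mu> where "local_rule G A \<tau> S \<mu>" and one: "\<one>\<^bsub>G\<^esub> \<in> S"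
    and active: "\<And>z. z \<in> S \<rightarrow>\<^sub>E A \<Longrightarrow> \<mu> z = z \<one>\<^bsub>G\<^esub> \<longleftrightarrow> z \<noteq> p"
    unfolding lazy_uat_def by blast
  then have "S \<subseteq> carrier G"
    and \<tau>_local: "\<And>g. g \<in> carrier G \<Longrightarrow> \<tau> y g = \<mu> (restrict (shift G g y) S)"
    using y unfolding local_rule_def by auto
  have cell_moves_iff: "\<tau> y g \<noteq> y g \<longleftrightarrow> restrict (shift G g y) S = p" if g: "g \<in> carrier G" for g
    using active[OF restrict_shift_in_PiE[OF \<open>monoid G\<close> y g \<open>S \<subseteq> carrier G\<close>]]
      \<tau>_local[OF g] restrict_shift_one[OF \<open>monoid G\<close> g one, of y] by metis
  have "\<tau> y \<in> config G A"
    using \<open>cellular_automaton G A \<tau>\<close> y unfolding cellular_automaton_def by auto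
  then have "\<tau> y \<noteq> y \<longleftrightarrow> (\<exists>g\<in>carrier G. \<tau> y g \<noteq> y g)"
    using y by (rule config_neq_iff)
  also have "\<dots> \<longleftrightarrow> appears G S p y"
    unfolding appears_def using cell_moves_iff by blast
  finally show ?thesis .
qed

theorem corollary1:
  fixes G :: "('g, 'm) monoid_scheme" and A :: "'a set"
    and \<tau> :: "('g \<Rightarrow> 'a) \<Rightarrow> ('g \<Rightarrow> 'a)" and S :: "'g set" and p :: "'g \<Rightarrow> 'a" and n :: nat
  assumes "group G"
    and "\<exists>a b. a \<in> A \<and> b \<in> A \<and> a \<noteq> b"
    and "cellular_automaton G A \<tau>"
    and "lazy_uat G A \<tau> S p"
  shows "(\<exists>x\<in>config G A. (\<tau> ^^ n) x \<noteq> (\<tau> ^^ Suc n) x) \<longleftrightarrow>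
         (\<exists>x\<in>config G A. appears G S p ((\<tau> ^^ n) x))"
proof -
  have "(\<tau> ^^ n) x \<noteq> \<tau> ((\<tau> ^^ n) x) \<longleftrightarrow> appears G S p ((\<tau> ^^ n) x)"
    if "x \<in> config G A" for x
    using lazy_uat_moves_iff_appears[OF group.is_monoid[OF \<open>group G\<close>] assms(3,4)
        cellular_automaton_funpow_config[OF assms(3) that]]
    by metis
  then show ?thesis by simp
qed

end
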